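(* Let $K$ be a field, $I\subset R=K[x_1,\ldots,x_n]$ a monomial ideal, and $\mathfrak{p}$ a monomial prime ideal of $R$ containing $I$. If $I$ has the copersistence property, then the monomial localization $I(\mathfrak{p})\subset R(\mathfrak{p})$ has the copersistence property.
   Context: An ideal $I$ in a commutative Noetherian ring $R$ has the copersistence property if $\mathrm{Ass}_R(R/I^k)\supseteq\mathrm{Ass}_R(R/I^{k+1})$ for all $k\ge1$. For a monomial prime ideal $\mathfrak{p}=(x_{i_1},\ldots,x_{i_r})$, $R(\mathfrak{p})=K[x_{i_1},\ldots,x_{i_r}]$ and the monomial localization $I(\mathfrak{p})$ is the ideal of $R(\mathfrak{p})$ obtained as the image of $I$ under the $K$-algebra homomorphism $R\to R(\mathfrak{p})$ sending $x_j\mapsto1$ for all $x_j\notin\{x_{i_1},\ldots,x_{i_r}\}$ and fixing the other variables. *)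

theory Defs
  imports "HOL-Library.Poly_Mapping"
begin

text \<open>Polynomials over a field 'k in the variables x_i (i :: nat):
  a polynomial is a finitely supported map from monomials (exponent vectors,
  nat =>0 nat) to coefficients.\<close>

type_synonym 'k mpoly = "(nat \<Rightarrow>\<^sub>0 nat) \<Rightarrow>\<^sub>0 'k"

definition pvars :: "'k::zero mpoly \<Rightarrow> nat set" where
  "pvars p = (\<Union>m\<in>Poly_Mapping.keys p. Poly_Mapping.keys m)"

definition Pring :: "nat set \<Rightarrow> 'k::field mpoly set" where
  "Pring V = {p. pvars p \<subseteq> V}"

definition ideal_in :: "'a::comm_ring_1 set \<Rightarrow> 'a set \<Rightarrow> bool" where
  "ideal_in S I \<longleftrightarrow> I \<subseteq> S \<and> 0 \<in> I \<and> (\<forall>a\<in>I. \<forall>b\<in>I. a + b \<in> I)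
     \<and> (\<forall>r\<in>S. \<forall>a\<in>I. r * a \<in> I)"

definition gen_ideal :: "'a::comm_ring_1 set \<Rightarrow> 'a set \<Rightarrow> 'a set" where
  "gen_ideal S G = \<Inter>{I. ideal_in S I \<and> G \<subseteq> I}"

definition prime_ideal_in :: "'a::comm_ring_1 set \<Rightarrow> 'a set \<Rightarrow> bool" where
  "prime_ideal_in S P \<longleftrightarrow> ideal_in S P \<and> P \<noteq> S
     \<and> (\<forall>a\<in>S. \<forall>b\<in>S. a * b \<in> P \<longrightarrow> a \<in> P \<or> b \<in> P)"

fun ideal_pow :: "'a::comm_ring_1 set \<Rightarrow> 'a set \<Rightarrow> nat \<Rightarrow> 'a set" where
  "ideal_pow S I 0 = S"
| "ideal_pow S I (Suc k) = gen_ideal S {a * b | a b. a \<in> ideal_pow S I k \<and> b \<in> I}"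

text \<open>Ass_S(S/J): prime ideals of S of the form (J : f) for some f \<in> S.\<close>
definition Ass :: "'a::comm_ring_1 set \<Rightarrow> 'a set \<Rightarrow> 'a set set" where
  "Ass S J = {P. prime_ideal_in S P \<and> (\<exists>f\<in>S. P = {g\<in>S. g * f \<in> J})}"

definition copersistent :: "'a::comm_ring_1 set \<Rightarrow> 'a set \<Rightarrow> bool" where
  "copersistent S I \<longleftrightarrow>
     (\<forall>k\<ge>1. Ass S (ideal_pow S I (Suc k)) \<subseteq> Ass S (ideal_pow S I k))"

definition monomial :: "(nat \<Rightarrow>\<^sub>0 nat) \<Rightarrow> 'k::field mpoly" where
  "monomial m = Poly_Mapping.single m 1"

definition var :: "nat \<Rightarrow> 'k::field mpoly" where
  "var i = monomial (Poly_Mapping.single i 1)"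

definition monomial_ideal :: "nat set \<Rightarrow> 'k::field mpoly set \<Rightarrow> bool" where
  "monomial_ideal V I \<longleftrightarrow> ideal_in (Pring V) I \<and>
     (\<exists>M. M \<subseteq> {m. Poly_Mapping.keys m \<subseteq> V} \<and> I = gen_ideal (Pring V) (monomial ` M))"

definition monomial_prime :: "nat set \<Rightarrow> nat set \<Rightarrow> 'k::field mpoly set" where
  "monomial_prime V W = gen_ideal (Pring V) (var ` W)"

text \<open>Substitution x_j \<mapsto> 1 for j \<notin> W: on monomials, restrict the exponent vector to W.\<close>
definition restr_mon :: "nat set \<Rightarrow> (nat \<Rightarrow>\<^sub>0 nat) \<Rightarrow> (nat \<Rightarrow>\<^sub>0 nat)" where
  "restr_mon W m = Abs_poly_mapping (\<lambda>i. if i \<in> W then Poly_Mapping.lookup m i else 0)"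

definition loc_map :: "nat set \<Rightarrow> 'k::field mpoly \<Rightarrow> 'k mpoly" where
  "loc_map W p = (\<Sum>m\<in>Poly_Mapping.keys p. Poly_Mapping.single (restr_mon W m) (Poly_Mapping.lookup p m))"

definition mon_loc :: "nat set \<Rightarrow> 'k::field mpoly set \<Rightarrow> 'k mpoly set" where
  "mon_loc W I = loc_map W ` I"

end

theory Submission
  imports Defs
begin

text \<open>
  A monomial ideal J = (x^g : g \<in> G) has only associated primes of the form
  P_T = (x_i : i \<in> T), and P_T \<in> Ass(J) exactly when P_T = (J : x^w) for a monomial x^w:
  one shows that a prime (J : f) contains every term of each of its elements, by induction on the
  number of terms of f outside J, and then that some term of f can replace f. The condition
  P_T = (J : x^w) only involves exponent vectors: x^m \<in> P_T iff x^(m + w) \<in> J.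
  Powers and monomial localisations of monomial ideals are again monomial, generated by the
  k-fold sums of G and by the restrictions of G to the variables of p respectively. A witness w
  for J restricts to a witness for J(p), and a witness for J(p) extends to one for J by adding
  large exponents at the variables outside p. Hence Ass(I(p)^k) consists of the P_T(p) with
  P_T \<in> Ass(I^k) and P_T \<subseteq> p, and copersistence passes from I to I(p).
\<close>

abbreviation lookup :: "('a \<Rightarrow>\<^sub>0 'b::zero) \<Rightarrow> 'a \<Rightarrow> 'b" where
  "lookup \<equiv> Poly_Mapping.lookup"

abbreviation keys :: "('a \<Rightarrow>\<^sub>0 'b::zero) \<Rightarrow> 'a set" where
  "keys \<equiv> Poly_Mapping.keys"

abbreviation single :: "'a \<Rightarrow> 'b::zero \<Rightarrow> 'a \<Rightarrow>\<^sub>0 'b" where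
  "single \<equiv> Poly_Mapping.single"

section \<open>Polynomial subrings\<close>

lemma Pring_iff: "p \<in> Pring V \<longleftrightarrow> (\<forall>m\<in>keys p. keys m \<subseteq> V)"
  by (auto simp: Pring_def pvars_def)

lemma keys_add_exps: "keys (a + b) = keys a \<union> keys b" for a b :: "nat \<Rightarrow>\<^sub>0 nat"
  by (auto simp: in_keys_iff lookup_add)

lemma Pring_zero: "0 \<in> Pring V"
  and Pring_one: "1 \<in> Pring V"
  by (auto simp: Pring_iff)

lemma Pring_single: "keys m \<subseteq> V \<Longrightarrow> single m c \<in> Pring V"
  by (auto simp: Pring_iff)

lemma Pring_monomial: "keys m \<subseteq> V \<Longrightarrow> monomial m \<in> Pring V"
  by (simp add: monomial_def Pring_single)

lemma Pring_var: "i \<in> V \<Longrightarrow> var i \<in> Pring V"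
  by (simp add: var_def Pring_monomial)

lemma Pring_add: "p \<in> Pring V \<Longrightarrow> q \<in> Pring V \<Longrightarrow> p + q \<in> Pring V"
  using keys_add[of p q] by (auto simp: Pring_iff)

lemma Pring_diff: "p \<in> Pring V \<Longrightarrow> q \<in> Pring V \<Longrightarrow> p - q \<in> Pring V"
  using keys_diff[of p q] by (auto simp: Pring_iff)

lemma Pring_mult: "p \<in> Pring V \<Longrightarrow> q \<in> Pring V \<Longrightarrow> p * q \<in> Pring V"
  using keys_mult[of p q] by (fastforce simp: Pring_iff keys_add_exps)

lemma Pring_sum: "(\<And>x. x \<in> A \<Longrightarrow> f x \<in> Pring V) \<Longrightarrow> sum f A \<in> Pring V"
  by (induction A rule: infinite_finite_induct) (auto intro: Pring_zero Pring_add)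

lemma Pring_prod: "(\<And>x. x \<in> A \<Longrightarrow> f x \<in> Pring V) \<Longrightarrow> prod f A \<in> Pring V"
  by (induction A rule: infinite_finite_induct) (auto intro: Pring_one Pring_mult)

lemma Pring_power: "p \<in> Pring V \<Longrightarrow> p ^ k \<in> Pring V"
  by (induction k) (simp_all add: Pring_one Pring_mult)

lemma poly_mapping_eq_sum_single: "p = (\<Sum>m\<in>keys p. single m (lookup p m))"
proof (rule poly_mapping_eqI)
  fix k
  show "lookup p k = lookup (\<Sum>m\<in>keys p. single m (lookup p m)) k"
    by (cases "k \<in> keys p") (auto simp: lookup_sum lookup_single when_def in_keys_iff)
qed

lemma keys_monomial [simp]: "keys (monomial m :: 'k::field mpoly) = {m}"
  by (simp add: monomial_def)

lemma single_eq_const_mult_monomial: "single m c = single 0 c * (monomial m :: 'k::field mpoly)"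
  by (simp add: monomial_def mult_single)

lemma monomial_zero: "(monomial 0 :: 'k::field mpoly) = 1"
  by (simp add: monomial_def)

lemma monomial_add: "(monomial (a + b) :: 'k::field mpoly) = monomial a * monomial b"
  by (simp add: monomial_def mult_single)

lemma monomial_sum: "(monomial (sum f A) :: 'k::field mpoly) = (\<Prod>x\<in>A. monomial (f x))"
  by (induction A rule: infinite_finite_induct) (auto simp: monomial_zero monomial_add)

lemma monomial_single_eq_var_pow: "(monomial (single i k) :: 'k::field mpoly) = var i ^ k"
proof (induction k)
  case (Suc k)
  have "single i (Suc k) = single i 1 + single i k"
    by (simp add: single_add[symmetric])
  then show ?case
    using Suc by (simp add: monomial_add var_def)
qed (simp add: monomial_zero)

lemma monomial_eq_prod_var_pow:
  "(monomial m :: 'k::field mpoly) = (\<Prod>i\<in>keys m. var i ^ lookup m i)"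
  by (subst poly_mapping_eq_sum_single) (simp add: monomial_sum monomial_single_eq_var_pow)

lemma mult_monomial_eq_sum: "h * monomial w = (\<Sum>m\<in>keys h. single (m + w) (lookup h m))"
  by (subst poly_mapping_eq_sum_single[of h]) (simp add: monomial_def sum_distrib_right mult_single)

lemma lookup_mult_monomial:
  "lookup (h * monomial w) (m + w) = lookup (h :: 'k::field mpoly) m"
  by (cases "m \<in> keys h")
    (simp_all add: mult_monomial_eq_sum lookup_sum lookup_single when_def in_keys_iff sum.delta)

lemma keys_mult_monomial: "keys (h * (monomial w :: 'k::field mpoly)) = (\<lambda>m. m + w) ` keys h"
proof
  show "keys (h * monomial w) \<subseteq> (\<lambda>m. m + w) ` keys h"
    using keys_mult[of h "monomial w"] by auto
  show "(\<lambda>m. m + w) ` keys h \<subseteq> keys (h * monomial w)"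
    by (auto simp: in_keys_iff lookup_mult_monomial)
qed

lemma lookup_mult_eq_sum:
  "lookup (a * b) k =
     (\<Sum>x\<in>keys a. \<Sum>y\<in>keys b. if x + y = k then lookup a x * lookup (b :: 'k::field mpoly) y else 0)"
proof -
  have "a * b = (\<Sum>x\<in>keys a. \<Sum>y\<in>keys b. single (x + y) (lookup a x * lookup b y))"
    by (subst (1) poly_mapping_eq_sum_single[of a], subst (1) poly_mapping_eq_sum_single[of b])
      (simp add: sum_product mult_single)
  then show ?thesis
    by (simp add: lookup_sum lookup_single when_def)
qed

text \<open>Max refers to the lexicographic order on exponents, which is compatible with addition,
  so the product of the leading terms of a and b cannot cancel in a * b.\<close>
lemma Max_keys_add_in_keys_mult:
  fixes a b :: "'k::field mpoly"
  assumes "a \<noteq> 0" "b \<noteq> 0"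
  shows "Max (keys a) + Max (keys b) \<in> keys (a * b)"
proof -
  let ?A = "Max (keys a)" and ?B = "Max (keys b)"
  have A: "?A \<in> keys a" and B: "?B \<in> keys b"
    using assms by auto
  have unique: "x + y = ?A + ?B \<longleftrightarrow> x = ?A \<and> y = ?B" if "x \<in> keys a" "y \<in> keys b" for x y
  proof
    assume sum_eq: "x + y = ?A + ?B"
    have "x \<le> ?A" "y \<le> ?B"
      using that by simp_all
    then show "x = ?A \<and> y = ?B"
      using sum_eq add_less_le_mono add_le_less_mono by (metis order.not_eq_order_implies_strict less_irrefl)
  qed simp
  have "lookup (a * b) (?A + ?B) = (\<Sum>x\<in>keys a. \<Sum>y\<in>keys b. if x = ?A \<and> y = ?B then lookup a x * lookup b y else 0)"
    unfolding lookup_mult_eq_sum by (intro sum.cong refl) (simp add: unique)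
  also have "\<dots> = (\<Sum>x\<in>keys a. if x = ?A then lookup a ?A * lookup b ?B else 0)"
    using B by (intro sum.cong refl) (simp add: sum.delta')
  also have "\<dots> = lookup a ?A * lookup b ?B"
    using A by (simp add: sum.delta')
  finally show ?thesis
    using A B by (simp add: in_keys_iff)
qed

section \<open>Ideals, colon ideals and primes\<close>

lemma ideal_in_subset: "ideal_in S I \<Longrightarrow> I \<subseteq> S"
  and ideal_in_zero: "ideal_in S I \<Longrightarrow> 0 \<in> I"
  and ideal_in_add: "ideal_in S I \<Longrightarrow> a \<in> I \<Longrightarrow> b \<in> I \<Longrightarrow> a + b \<in> I"
  and ideal_in_mult: "ideal_in S I \<Longrightarrow> r \<in> S \<Longrightarrow> a \<in> I \<Longrightarrow> r * a \<in> I"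
  by (auto simp: ideal_in_def)

lemma ideal_in_sum: "ideal_in S I \<Longrightarrow> (\<And>x. x \<in> A \<Longrightarrow> f x \<in> I) \<Longrightarrow> sum f A \<in> I"
  by (induction A rule: infinite_finite_induct) (auto simp: ideal_in_def)

lemma ideal_in_Pring_diff:
  assumes I: "ideal_in (Pring V) I" and "a \<in> I" "b \<in> I"
  shows "a - b \<in> (I :: 'k::field mpoly set)"
proof -
  have "(- 1) * b \<in> I"
    using Pring_diff[OF Pring_zero Pring_one] by (intro ideal_in_mult[OF I]) (simp_all add: \<open>b \<in> I\<close>)
  then have "a + (- b) \<in> I"
    by (intro ideal_in_add[OF I \<open>a \<in> I\<close>]) simp
  then show ?thesis
    by simp
qed

lemma gen_ideal_eqI:
  assumes "ideal_in S J" "G \<subseteq> J" "\<And>I. ideal_in S I \<Longrightarrow> G \<subseteq> I \<Longrightarrow> J \<subseteq> I"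
  shows "gen_ideal S G = J"
  using assms unfolding gen_ideal_def by blast

lemma prime_ideal_in_one_notin:
  assumes "prime_ideal_in S P"
  shows "1 \<notin> P"
proof
  assume "1 \<in> P"
  then have "r \<in> P" if "r \<in> S" for r
    using assms that ideal_in_mult[of S P r 1] by (simp add: prime_ideal_in_def)
  then show False
    using assms by (auto simp: prime_ideal_in_def ideal_in_def)
qed

lemma prime_ideal_in_prod_mem:
  assumes P: "prime_ideal_in (Pring V) P" and "finite A"
    and "\<And>x. x \<in> A \<Longrightarrow> f x \<in> Pring V" and "prod f A \<in> (P :: 'k::field mpoly set)"
  shows "\<exists>x\<in>A. f x \<in> P"
  using assms(2-)
proof (induction A rule: finite_induct)
  case empty
  then show ?case
    using prime_ideal_in_one_notin[OF P] by simp
next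
  case (insert x A)
  then have "f x \<in> P \<or> prod f A \<in> P"
    using P Pring_prod[of A f V] by (auto simp: prime_ideal_in_def)
  then show ?case
    using insert by auto
qed

lemma prime_ideal_in_pow_mem:
  assumes "prime_ideal_in (Pring V) P" "x \<in> Pring V" "x ^ k \<in> (P :: 'k::field mpoly set)"
  shows "x \<in> P"
  using prime_ideal_in_prod_mem[of V P "{..<k}" "\<lambda>_. x"] assms by auto

definition colon :: "'a::comm_ring_1 set \<Rightarrow> 'a set \<Rightarrow> 'a \<Rightarrow> 'a set" where
  "colon S J f = {h \<in> S. h * f \<in> J}"

lemma Ass_iff: "P \<in> Ass S J \<longleftrightarrow> prime_ideal_in S P \<and> (\<exists>f\<in>S. P = colon S J f)"
  by (simp add: Ass_def colon_def)

lemma colon_eq_if_diff_mem: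
  assumes J: "ideal_in (Pring V) J" and "f - g \<in> J"
  shows "colon (Pring V) J f = colon (Pring V) J (g :: 'k::field mpoly)"
proof -
  have diff: "h * f - h * g \<in> J" if "h \<in> Pring V" for h
    using ideal_in_mult[OF J that \<open>f - g \<in> J\<close>] by (simp add: right_diff_distrib)
  have "h * f \<in> J \<longleftrightarrow> h * g \<in> J" if "h \<in> Pring V" for h
    using ideal_in_Pring_diff[OF J _ diff[OF that]] ideal_in_add[OF J diff[OF that]]
    by (metis add_diff_cancel_left' diff_add_cancel diff_diff_cancel)
  then show ?thesis
    by (auto simp: colon_def)
qed

lemma colon_mult_nonmember:
  assumes P: "prime_ideal_in (Pring V) (colon (Pring V) J f)"
    and u: "u \<in> Pring V" "u \<notin> colon (Pring V) J f"
  shows "colon (Pring V) J (f * u) = colon (Pring V) J (f :: 'k::field mpoly)"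
proof -
  let ?P = "colon (Pring V) J f"
  have "h * (f * u) \<in> J \<longleftrightarrow> h \<in> ?P" if h: "h \<in> Pring V" for h
  proof -
    have "h * (f * u) \<in> J \<longleftrightarrow> h * u \<in> ?P"
      using Pring_mult[OF h u(1)] by (simp add: colon_def ac_simps)
    also have "\<dots> \<longleftrightarrow> h \<in> ?P"
      using P h u ideal_in_mult[of "Pring V" ?P u h] by (auto simp: prime_ideal_in_def mult.commute)
    finally show ?thesis .
  qed
  then show ?thesis
    by (auto simp: colon_def)
qed

section \<open>Monomial ideals\<close>

definition divisible :: "(nat \<Rightarrow>\<^sub>0 nat) set \<Rightarrow> (nat \<Rightarrow>\<^sub>0 nat) \<Rightarrow> bool" where
  "divisible G m \<longleftrightarrow> (\<exists>g\<in>G. \<forall>i. lookup g i \<le> lookup m i)"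

definition mon_ideal :: "nat set \<Rightarrow> (nat \<Rightarrow>\<^sub>0 nat) set \<Rightarrow> 'k::field mpoly set" where
  "mon_ideal V G = {p \<in> Pring V. \<forall>m\<in>keys p. divisible G m}"

definition exps :: "nat set \<Rightarrow> (nat \<Rightarrow>\<^sub>0 nat) set" where
  "exps V = {m. keys m \<subseteq> V}"

lemma divisible_self: "g \<in> G \<Longrightarrow> divisible G g"
  by (auto simp: divisible_def)

lemma divisible_add: "divisible G m \<Longrightarrow> divisible G (m + x)"
  and divisible_add_left: "divisible G m \<Longrightarrow> divisible G (x + m)"
  unfolding divisible_def lookup_add by (blast intro: trans_le_add1 trans_le_add2)+

lemma divisible_iff_add: "divisible G m \<longleftrightarrow> (\<exists>g\<in>G. \<exists>d. m = g + d)"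
proof
  assume "divisible G m"
  then obtain g where "g \<in> G" "\<forall>i. lookup g i \<le> lookup m i"
    by (auto simp: divisible_def)
  then have "m = g + (m - g)"
    by (intro poly_mapping_eqI) (simp add: lookup_add lookup_minus)
  then show "\<exists>g\<in>G. \<exists>d. m = g + d"
    using \<open>g \<in> G\<close> by blast
qed (auto intro: divisible_add divisible_self)

lemma mon_ideal_ideal: "ideal_in (Pring V) (mon_ideal V G :: 'k::field mpoly set)"
  unfolding ideal_in_def
proof (intro conjI ballI)
  fix a b :: "'k mpoly"
  assume "a \<in> mon_ideal V G" "b \<in> mon_ideal V G"
  then show "a + b \<in> mon_ideal V G"
    using keys_add[of a b] by (auto simp: mon_ideal_def intro: Pring_add)
next
  fix r a :: "'k mpoly"
  assume "r \<in> Pring V" "a \<in> mon_ideal V G"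
  then show "r * a \<in> mon_ideal V G"
    using keys_mult[of r a] by (auto simp: mon_ideal_def intro!: Pring_mult divisible_add_left)
qed (auto simp: mon_ideal_def intro: Pring_zero)

lemma monomial_in_mon_ideal_iff:
  "keys m \<subseteq> V \<Longrightarrow> monomial m \<in> mon_ideal V G \<longleftrightarrow> divisible G m"
  by (simp add: mon_ideal_def Pring_monomial)

lemma mult_monomial_in_mon_ideal_iff:
  assumes "h \<in> Pring V" "keys w \<subseteq> V"
  shows "h * (monomial w :: 'k::field mpoly) \<in> mon_ideal V G \<longleftrightarrow> (\<forall>m\<in>keys h. divisible G (m + w))"
  using Pring_mult[OF assms(1) Pring_monomial[OF assms(2)]] by (auto simp: mon_ideal_def keys_mult_monomial)

lemma mon_ideal_least:
  assumes I: "ideal_in (Pring V) I" and sub: "monomial ` G \<subseteq> I"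
  shows "mon_ideal V G \<subseteq> (I :: 'k::field mpoly set)"
proof
  fix p :: "'k mpoly"
  assume p: "p \<in> mon_ideal V G"
  have "single m (lookup p m) \<in> I" if m: "m \<in> keys p" for m
  proof -
    obtain g d where g: "g \<in> G" and md: "m = g + d"
      using p m by (auto simp: mon_ideal_def divisible_iff_add)
    have "keys m \<subseteq> V"
      using p m by (auto simp: mon_ideal_def Pring_iff)
    then have "keys d \<subseteq> V"
      unfolding md keys_add_exps by simp
    then have "single d (lookup p m) * monomial g \<in> I"
      using sub g by (auto intro!: ideal_in_mult[OF I] Pring_single)
    then show ?thesis
      by (simp add: md monomial_def mult_single add.commute)
  qed
  then have "(\<Sum>m\<in>keys p. single m (lookup p m)) \<in> I"
    by (rule ideal_in_sum[OF I])
  then show "p \<in> I"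
    by (simp flip: poly_mapping_eq_sum_single)
qed

lemma gen_ideal_monomials:
  assumes "G \<subseteq> exps V"
  shows "gen_ideal (Pring V) (monomial ` G :: 'k::field mpoly set) = mon_ideal V G"
proof (rule gen_ideal_eqI)
  show "monomial ` G \<subseteq> (mon_ideal V G :: 'k mpoly set)"
    using assms by (auto simp: exps_def monomial_in_mon_ideal_iff divisible_self)
  show "mon_ideal V G \<subseteq> I" if "ideal_in (Pring V) I" "monomial ` G \<subseteq> I" for I :: "'k mpoly set"
    using that by (rule mon_ideal_least)
qed (rule mon_ideal_ideal)

lemma monomial_idealE:
  assumes "monomial_ideal V I"
  obtains G where "G \<subseteq> exps V" "I = mon_ideal V G"
proof -
  obtain G where "G \<subseteq> exps V" "I = gen_ideal (Pring V) (monomial ` G)"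
    using assms by (auto simp: monomial_ideal_def exps_def)
  then show ?thesis
    using that by (simp add: gen_ideal_monomials)
qed

lemma Pring_eq_mon_ideal: "Pring V = mon_ideal V {0}"
  by (auto simp: mon_ideal_def divisible_def)

fun mon_pow :: "(nat \<Rightarrow>\<^sub>0 nat) set \<Rightarrow> nat \<Rightarrow> (nat \<Rightarrow>\<^sub>0 nat) set" where
  "mon_pow G 0 = {0}"
| "mon_pow G (Suc k) = {a + b | a b. a \<in> mon_pow G k \<and> b \<in> G}"

lemma sums_exps: "A \<subseteq> exps V \<Longrightarrow> B \<subseteq> exps V \<Longrightarrow> {a + b | a b. a \<in> A \<and> b \<in> B} \<subseteq> exps V"
proof safe
  fix a b assume "a \<in> A" "b \<in> B" and "A \<subseteq> exps V" "B \<subseteq> exps V"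
  then show "a + b \<in> exps V"
    by (auto simp: exps_def keys_add_exps)
qed

lemma mon_pow_exps: "G \<subseteq> exps V \<Longrightarrow> mon_pow G k \<subseteq> exps V"
proof (induction k)
  case 0
  then show ?case
    by (simp add: exps_def)
qed (simp add: sums_exps)

lemma mult_mem_mon_ideal_sums:
  assumes a: "a \<in> mon_ideal V A" and b: "b \<in> mon_ideal V B"
  shows "a * b \<in> (mon_ideal V {x + y | x y. x \<in> A \<and> y \<in> B} :: 'k::field mpoly set)"
proof -
  have "divisible {x + y | x y. x \<in> A \<and> y \<in> B} m" if m: "m \<in> keys (a * b)" for m
  proof -
    obtain u v where uv: "u \<in> keys a" "v \<in> keys b" "m = u + v"
      using m keys_mult[of a b] by blast
    have "divisible A u" "divisible B v"
      using a b uv by (simp_all add: mon_ideal_def)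
    then obtain x y where "x \<in> A" "\<forall>i. lookup x i \<le> lookup u i" "y \<in> B" "\<forall>i. lookup y i \<le> lookup v i"
      unfolding divisible_def by blast
    then show ?thesis
      unfolding divisible_def uv(3) by (intro bexI[of _ "x + y"] allI) (auto simp: lookup_add intro: add_mono)
  qed
  moreover have "a * b \<in> Pring V"
    using a b by (intro Pring_mult) (simp_all add: mon_ideal_def)
  ultimately show ?thesis
    by (simp add: mon_ideal_def)
qed

lemma gen_ideal_products_mon_ideal:
  assumes A: "A \<subseteq> exps V" and B: "B \<subseteq> exps V"
  shows "gen_ideal (Pring V) {a * b | a b. a \<in> mon_ideal V A \<and> b \<in> (mon_ideal V B :: 'k::field mpoly set)}
     = mon_ideal V {x + y | x y. x \<in> A \<and> y \<in> B}"
proof (rule gen_ideal_eqI)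
  show "{a * b | a b. a \<in> mon_ideal V A \<and> b \<in> mon_ideal V B}
      \<subseteq> (mon_ideal V {x + y | x y. x \<in> A \<and> y \<in> B} :: 'k mpoly set)"
    using mult_mem_mon_ideal_sums by blast
next
  fix I :: "'k mpoly set"
  assume I: "ideal_in (Pring V) I"
    and sub: "{a * b | a b. a \<in> mon_ideal V A \<and> b \<in> mon_ideal V B} \<subseteq> I"
  have "monomial (x + y) \<in> I" if "x \<in> A" "y \<in> B" for x y
  proof -
    have "monomial x \<in> (mon_ideal V A :: 'k mpoly set)" "monomial y \<in> (mon_ideal V B :: 'k mpoly set)"
      using that A B by (auto simp: exps_def monomial_in_mon_ideal_iff divisible_self)
    then show ?thesis
      using sub by (auto simp: monomial_add)
  qed
  then have "monomial ` {x + y | x y. x \<in> A \<and> y \<in> B} \<subseteq> I"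
    by blast
  then show "mon_ideal V {x + y | x y. x \<in> A \<and> y \<in> B} \<subseteq> I"
    by (rule mon_ideal_least[OF I])
qed (rule mon_ideal_ideal)

lemma ideal_pow_mon_ideal:
  assumes "G \<subseteq> exps V"
  shows "ideal_pow (Pring V) (mon_ideal V G :: 'k::field mpoly set) k = mon_ideal V (mon_pow G k)"
proof (induction k)
  case (Suc k)
  then show ?case
    using gen_ideal_products_mon_ideal[OF mon_pow_exps[OF assms] assms] by simp
qed (simp add: Pring_eq_mon_ideal)

section \<open>Monomial localisation\<close>

lemma lookup_restr_mon: "lookup (restr_mon W m) i = (if i \<in> W then lookup m i else 0)"
proof -
  have "finite {i. (if i \<in> W then lookup m i else 0) \<noteq> 0}"
    by (rule finite_subset[of _ "keys m"]) (auto simp: in_keys_iff)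
  then show ?thesis
    by (simp add: restr_mon_def)
qed

lemma keys_restr_mon: "keys (restr_mon W m) = W \<inter> keys m"
  by (auto simp: in_keys_iff lookup_restr_mon split: if_splits)

lemma restr_mon_add: "restr_mon W (a + b) = restr_mon W a + restr_mon W b"
  by (rule poly_mapping_eqI) (simp add: lookup_restr_mon lookup_add)

lemma restr_mon_zero: "restr_mon W 0 = 0"
  by (rule poly_mapping_eqI) (simp add: lookup_restr_mon)

lemma restr_mon_id: "keys m \<subseteq> W \<Longrightarrow> restr_mon W m = m"
  by (rule poly_mapping_eqI) (auto simp: lookup_restr_mon in_keys_iff)

lemma restr_mon_restr_mon_compl: "restr_mon W (restr_mon (- W) m) = 0"
  by (rule poly_mapping_eqI) (simp add: lookup_restr_mon)

lemma restr_mon_exps: "restr_mon W ` G \<subseteq> exps W"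
  by (auto simp: exps_def keys_restr_mon)

lemma divisible_restr_mon: "divisible G m \<Longrightarrow> divisible (restr_mon W ` G) (restr_mon W m)"
  unfolding divisible_def by (auto simp: lookup_restr_mon)

lemma divisible_add_restr_mon_compl:
  assumes "g \<in> G" "\<And>j. lookup (restr_mon W g) j \<le> lookup m j"
  shows "divisible G (m + restr_mon (- W) g)"
proof -
  have "lookup g i \<le> lookup (m + restr_mon (- W) g) i" for i
    using assms(2)[of i] by (cases "i \<in> W") (simp_all add: lookup_add lookup_restr_mon)
  then show ?thesis
    using assms(1) by (auto simp: divisible_def)
qed

lemma restr_mon_sums:
  "restr_mon W ` {a + b | a b. a \<in> A \<and> b \<in> B}
     = {a + b | a b. a \<in> restr_mon W ` A \<and> b \<in> restr_mon W ` B}"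
proof
  show "restr_mon W ` {a + b | a b. a \<in> A \<and> b \<in> B}
      \<subseteq> {a + b | a b. a \<in> restr_mon W ` A \<and> b \<in> restr_mon W ` B}"
  proof (rule image_subsetI)
    fix x
    assume "x \<in> {a + b | a b. a \<in> A \<and> b \<in> B}"
    then obtain a b where "a \<in> A" "b \<in> B" "restr_mon W x = restr_mon W a + restr_mon W b"
      by (auto simp: restr_mon_add)
    then show "restr_mon W x \<in> {a + b | a b. a \<in> restr_mon W ` A \<and> b \<in> restr_mon W ` B}"
      by blast
  qed
next
  show "{a + b | a b. a \<in> restr_mon W ` A \<and> b \<in> restr_mon W ` B}
      \<subseteq> restr_mon W ` {a + b | a b. a \<in> A \<and> b \<in> B}"
  proof safe
    fix a b
    assume "a \<in> A" "b \<in> B"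
    then show "restr_mon W a + restr_mon W b \<in> restr_mon W ` {a + b | a b. a \<in> A \<and> b \<in> B}"
      by (intro image_eqI[of _ _ "a + b"]) (auto simp: restr_mon_add)
  qed
qed

lemma mon_pow_restr_mon: "mon_pow (restr_mon W ` G) k = restr_mon W ` mon_pow G k"
  by (induction k) (simp_all add: restr_mon_zero restr_mon_sums)

lemma loc_map_eq_sum:
  assumes "finite S" "keys p \<subseteq> S"
  shows "loc_map W p = (\<Sum>m\<in>S. single (restr_mon W m) (lookup p m))"
  unfolding loc_map_def
  by (rule sum.mono_neutral_left) (use assms in \<open>auto simp: in_keys_iff\<close>)

lemma loc_map_add: "loc_map W (p + q) = loc_map W p + loc_map W q"
proof -
  let ?S = "keys p \<union> keys q"
  have "loc_map W (p + q) = (\<Sum>m\<in>?S. single (restr_mon W m) (lookup (p + q) m))"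
    using keys_add[of p q] by (intro loc_map_eq_sum) auto
  also have "\<dots> = (\<Sum>m\<in>?S. single (restr_mon W m) (lookup p m))
      + (\<Sum>m\<in>?S. single (restr_mon W m) (lookup q m))"
    by (simp add: lookup_add single_add sum.distrib)
  also have "\<dots> = loc_map W p + loc_map W q"
    by (subst (1 2) loc_map_eq_sum[of ?S]) auto
  finally show ?thesis .
qed

lemma loc_map_zero: "loc_map W 0 = 0"
  by (simp add: loc_map_def)

lemma loc_map_sum: "loc_map W (sum f A) = (\<Sum>x\<in>A. loc_map W (f x))"
  by (induction A rule: infinite_finite_induct) (simp_all add: loc_map_zero loc_map_add)

lemma loc_map_single: "loc_map W (single m c) = single (restr_mon W m) c"
  by (simp add: loc_map_def)

lemma loc_map_in_Pring: "loc_map W p \<in> Pring W"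
  unfolding loc_map_def by (intro Pring_sum Pring_single) (simp add: keys_restr_mon)

lemma keys_loc_map: "keys (loc_map W p) \<subseteq> restr_mon W ` keys p"
proof -
  have "keys (loc_map W p) \<subseteq> (\<Union>m\<in>keys p. keys (single (restr_mon W m) (lookup p m)))"
    unfolding loc_map_def by (rule keys_sum)
  also have "\<dots> \<subseteq> restr_mon W ` keys p"
    by auto
  finally show ?thesis .
qed

lemma loc_map_mon_ideal_subset:
  "loc_map W ` (mon_ideal V G :: 'k::field mpoly set) \<subseteq> mon_ideal W (restr_mon W ` G)"
proof safe
  fix p :: "'k mpoly"
  assume p: "p \<in> mon_ideal V G"
  have "divisible (restr_mon W ` G) m'" if "m' \<in> keys (loc_map W p)" for m'
  proof -
    obtain m where "m \<in> keys p" "m' = restr_mon W m"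
      using keys_loc_map \<open>m' \<in> keys (loc_map W p)\<close> by blast
    then show ?thesis
      using p divisible_restr_mon by (auto simp: mon_ideal_def)
  qed
  then show "loc_map W p \<in> mon_ideal W (restr_mon W ` G)"
    by (simp add: mon_ideal_def loc_map_in_Pring)
qed

lemma divisible_restr_monE:
  assumes "divisible (restr_mon W ` G) m" "keys m \<subseteq> W" "W \<subseteq> V" "G \<subseteq> exps V"
  obtains m' where "keys m' \<subseteq> V" "divisible G m'" "restr_mon W m' = m"
proof -
  obtain g where g: "g \<in> G" "\<And>i. lookup (restr_mon W g) i \<le> lookup m i"
    using assms(1) unfolding divisible_def by blast
  show ?thesis
  proof (rule that)
    show "keys (m + restr_mon (- W) g) \<subseteq> V"
      using assms(2-4) g(1) by (auto simp: exps_def keys_add_exps keys_restr_mon)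
    show "divisible G (m + restr_mon (- W) g)"
      using g by (rule divisible_add_restr_mon_compl)
    show "restr_mon W (m + restr_mon (- W) g) = m"
      using assms(2) by (simp add: restr_mon_add restr_mon_id restr_mon_restr_mon_compl)
  qed
qed

lemma mon_ideal_restr_mon_subset_loc_map:
  assumes W: "W \<subseteq> V" and G: "G \<subseteq> exps V"
  shows "mon_ideal W (restr_mon W ` G) \<subseteq> loc_map W ` (mon_ideal V G :: 'k::field mpoly set)"
proof
  fix q :: "'k mpoly"
  assume q: "q \<in> mon_ideal W (restr_mon W ` G)"
  have "\<exists>m'. keys m' \<subseteq> V \<and> divisible G m' \<and> restr_mon W m' = m" if "m \<in> keys q" for m
  proof -
    have "divisible (restr_mon W ` G) m" "keys m \<subseteq> W"
      using q that by (auto simp: mon_ideal_def Pring_iff)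
    then show ?thesis
      using divisible_restr_monE[OF _ _ W G] by metis
  qed
  then obtain lift where lift: "\<And>m. m \<in> keys q \<Longrightarrow> keys (lift m) \<subseteq> V"
    "\<And>m. m \<in> keys q \<Longrightarrow> divisible G (lift m)" "\<And>m. m \<in> keys q \<Longrightarrow> restr_mon W (lift m) = m"
    by metis
  define p where "p = (\<Sum>m\<in>keys q. single (lift m) (lookup q m))"
  have "p \<in> mon_ideal V G"
    unfolding p_def using lift(1,2)
    by (intro ideal_in_sum[OF mon_ideal_ideal]) (simp add: mon_ideal_def Pring_single)
  moreover have "loc_map W p = q"
  proof -
    have "loc_map W p = (\<Sum>m\<in>keys q. single m (lookup q m))"
      using lift(3) by (simp add: p_def loc_map_sum loc_map_single)
    then show ?thesis
      by (simp flip: poly_mapping_eq_sum_single)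
  qed
  ultimately show "q \<in> loc_map W ` mon_ideal V G"
    by blast
qed

lemma loc_map_mon_ideal:
  "W \<subseteq> V \<Longrightarrow> G \<subseteq> exps V \<Longrightarrow>
    loc_map W ` (mon_ideal V G :: 'k::field mpoly set) = mon_ideal W (restr_mon W ` G)"
  using loc_map_mon_ideal_subset mon_ideal_restr_mon_subset_loc_map by blast

section \<open>Associated primes of monomial ideals\<close>

lemma mon_ideal_monomial_closed:
  "h \<in> mon_ideal V G \<Longrightarrow> m \<in> keys h \<Longrightarrow> monomial m \<in> (mon_ideal V G :: 'k::field mpoly set)"
  by (auto simp: mon_ideal_def Pring_iff Pring_monomial)

definition monomial_closed :: "'k::field mpoly set \<Rightarrow> bool" where
  "monomial_closed P \<longleftrightarrow> (\<forall>h\<in>P. \<forall>m\<in>keys h. monomial m \<in> P)"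

lemma monomial_closed_mem_iff:
  assumes "monomial_closed P" "ideal_in (Pring V) P" "h \<in> Pring V"
  shows "h \<in> P \<longleftrightarrow> (\<forall>m\<in>keys h. monomial m \<in> (P :: 'k::field mpoly set))"
proof
  assume "\<forall>m\<in>keys h. monomial m \<in> P"
  then have "(\<Sum>m\<in>keys h. single 0 (lookup h m) * monomial m) \<in> P"
    by (intro ideal_in_sum[OF assms(2)] ideal_in_mult[OF assms(2)] Pring_single) simp_all
  then show "h \<in> P"
    by (simp flip: single_eq_const_mult_monomial poly_mapping_eq_sum_single)
qed (use assms(1) in \<open>simp add: monomial_closed_def\<close>)

lemma monomial_closedI_Max:
  assumes P: "ideal_in (Pring V) P"
    and lead: "\<And>a. a \<in> P \<Longrightarrow> a \<noteq> 0 \<Longrightarrow> monomial (Max (keys a)) \<in> P"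
  shows "monomial_closed (P :: 'k::field mpoly set)"
proof -
  have "\<forall>m\<in>keys a. monomial m \<in> P" if "a \<in> P" for a
    using that
  proof (induction "card (keys a)" arbitrary: a rule: less_induct)
    case (less a)
    show ?case
    proof (cases "a = 0")
      case False
      define s where "s = Max (keys a)"
      have s: "s \<in> keys a"
        using False by (simp add: s_def)
      have "single 0 (lookup a s) * monomial s \<in> P"
        using lead[OF less.prems False] by (intro ideal_in_mult[OF P] Pring_single) (simp_all add: s_def)
      then have "a - single s (lookup a s) \<in> P"
        by (intro ideal_in_Pring_diff[OF P less.prems]) (simp flip: single_eq_const_mult_monomial)
      moreover have keys_diff: "keys (a - single s (lookup a s)) = keys a - {s}"
        by (auto simp: in_keys_iff lookup_minus lookup_single when_def split: if_splits)
      moreover have "card (keys a - {s}) < card (keys a)"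
        using s by (intro card_Diff1_less) simp_all
      ultimately have "\<forall>m\<in>keys (a - single s (lookup a s)). monomial m \<in> P"
        by (intro less.hyps) simp_all
      then have "\<forall>m\<in>keys a - {s}. monomial m \<in> P"
        by (simp add: keys_diff)
      then show ?thesis
        using lead[OF less.prems False] by (auto simp: s_def)
    qed simp
  qed
  then show ?thesis
    by (simp add: monomial_closed_def)
qed

definition mon_nf :: "(nat \<Rightarrow>\<^sub>0 nat) set \<Rightarrow> 'k::field mpoly \<Rightarrow> 'k mpoly" where
  "mon_nf G f = (\<Sum>m\<in>{m \<in> keys f. \<not> divisible G m}. single m (lookup f m))"

lemma lookup_mon_nf: "lookup (mon_nf G f) m = (if divisible G m then 0 else lookup f m)"
  by (cases "m \<in> keys f") (auto simp: mon_nf_def lookup_sum lookup_single when_def in_keys_iff)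

lemma keys_mon_nf: "keys (mon_nf G f) = {m \<in> keys f. \<not> divisible G m}"
  by (auto simp: in_keys_iff lookup_mon_nf split: if_splits)

lemma mon_nf_in_Pring: "f \<in> Pring V \<Longrightarrow> mon_nf G f \<in> Pring V"
  by (auto simp: Pring_iff keys_mon_nf)

lemma diff_mon_nf_in_mon_ideal: "f \<in> Pring V \<Longrightarrow> f - mon_nf G f \<in> mon_ideal V G"
  unfolding mon_ideal_def
  by (auto intro!: Pring_diff mon_nf_in_Pring simp: in_keys_iff lookup_minus lookup_mon_nf split: if_splits)

lemma colon_mon_nf:
  assumes "f \<in> Pring V"
  shows "colon (Pring V) (mon_ideal V G) (mon_nf G f) = colon (Pring V) (mon_ideal V G) f"
  using colon_eq_if_diff_mem[OF mon_ideal_ideal diff_mon_nf_in_mon_ideal[OF assms]] by simp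

lemma card_keys_mon_nf_mult_monomial_less:
  assumes "f \<noteq> 0" "divisible G (Max (keys f) + s)"
  shows "card (keys (mon_nf G (f * monomial s))) < card (keys (f :: 'k::field mpoly))"
proof -
  have "keys (mon_nf G (f * monomial s)) \<subseteq> (\<lambda>m. m + s) ` (keys f - {Max (keys f)})"
    using assms(2) by (auto simp: keys_mon_nf keys_mult_monomial)
  then have "card (keys (mon_nf G (f * monomial s))) \<le> card ((\<lambda>m. m + s) ` (keys f - {Max (keys f)}))"
    by (intro card_mono) simp_all
  also have "\<dots> \<le> card (keys f - {Max (keys f)})"
    by (rule card_image_le) simp
  also have "\<dots> < card (keys f)"
    using assms(1) by (intro card_Diff1_less) simp_all
  finally show ?thesis .
qed

lemma mon_nf_neq_zero_if_prime_colon: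
  assumes "f \<in> Pring V" "prime_ideal_in (Pring V) (colon (Pring V) (mon_ideal V G) f)"
  shows "mon_nf G f \<noteq> (0 :: 'k::field mpoly)"
proof
  assume "mon_nf G f = 0"
  then have "1 \<in> colon (Pring V) (mon_ideal V G) (mon_nf G f)"
    by (simp add: colon_def Pring_one ideal_in_zero[OF mon_ideal_ideal])
  then show False
    using prime_ideal_in_one_notin[OF assms(2)] by (simp add: colon_mon_nf[OF assms(1)])
qed

text \<open>The new generator is g = f' x^s for the normal form f' of f: since a f' lies in J, so does
  the leading term of f' x^s.\<close>
lemma prime_colon_reduce:
  assumes f: "f \<in> Pring V" and P: "prime_ideal_in (Pring V) (colon (Pring V) (mon_ideal V G) f)"
    and a: "a \<in> colon (Pring V) (mon_ideal V G) f" "a \<noteq> 0"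
    and s_notin: "monomial (Max (keys a)) \<notin> colon (Pring V) (mon_ideal V G) (f :: 'k::field mpoly)"
  obtains g where "g \<in> Pring V" "colon (Pring V) (mon_ideal V G) g = colon (Pring V) (mon_ideal V G) f"
    "card (keys (mon_nf G g)) < card (keys (mon_nf G f))"
proof -
  let ?J = "mon_ideal V G :: 'k mpoly set"
  define f' where "f' = mon_nf G f"
  define s where "s = Max (keys a)"
  have f': "f' \<in> Pring V" "f' \<noteq> 0"
    using mon_nf_in_Pring[OF f] mon_nf_neq_zero_if_prime_colon[OF f P] by (simp_all add: f'_def)
  have P_f': "colon (Pring V) ?J f' = colon (Pring V) ?J f"
    using colon_mon_nf[OF f] by (simp add: f'_def)
  have "s \<in> keys a" "a \<in> Pring V"
    using a by (simp_all add: s_def colon_def)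
  then have s_V: "keys s \<subseteq> V"
    by (simp add: Pring_iff)
  have "a \<in> colon (Pring V) ?J f'"
    using a(1) P_f' by simp
  then have "f' * a \<in> ?J"
    by (simp add: colon_def mult.commute)
  then have "divisible G (Max (keys f') + s)"
    using Max_keys_add_in_keys_mult[OF f'(2) a(2)] by (simp add: mon_ideal_def s_def)
  then have "card (keys (mon_nf G (f' * monomial s))) < card (keys (mon_nf G f))"
    using card_keys_mon_nf_mult_monomial_less[OF f'(2)] by (simp add: f'_def)
  moreover have "colon (Pring V) ?J (f' * monomial s) = colon (Pring V) ?J f"
    using colon_mult_nonmember[of V ?J f' "monomial s"] P Pring_monomial[OF s_V] s_notin
    by (simp add: P_f' s_def)
  moreover have "f' * monomial s \<in> Pring V"
    by (rule Pring_mult[OF f'(1) Pring_monomial[OF s_V]])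
  ultimately show ?thesis
    using that by blast
qed

lemma prime_colon_monomial_closed:
  assumes "f \<in> Pring V" "prime_ideal_in (Pring V) (colon (Pring V) (mon_ideal V G) f)"
  shows "monomial_closed (colon (Pring V) (mon_ideal V G) (f :: 'k::field mpoly))"
  using assms
proof (induction "card (keys (mon_nf G f))" arbitrary: f rule: less_induct)
  case less
  let ?P = "colon (Pring V) (mon_ideal V G) f"
  have P_ideal: "ideal_in (Pring V) ?P"
    using less.prems(2) by (simp add: prime_ideal_in_def)
  show ?case
  proof (rule monomial_closedI_Max[OF P_ideal])
    fix a
    assume a: "a \<in> ?P" "a \<noteq> 0"
    show "monomial (Max (keys a)) \<in> ?P"
    proof (rule ccontr)
      assume notin: "monomial (Max (keys a)) \<notin> ?P"
      then obtain g where g: "g \<in> Pring V" "colon (Pring V) (mon_ideal V G) g = ?P"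
        "card (keys (mon_nf G g)) < card (keys (mon_nf G f))"
        by (rule prime_colon_reduce[OF less.prems a])
      have "monomial_closed (colon (Pring V) (mon_ideal V G) g)"
        by (rule less.hyps[OF g(3) g(1)]) (simp add: g(2) less.prems(2))
      then show False
        using a notin by (auto simp: g(2) monomial_closed_def)
    qed
  qed
qed

text \<open>If no term x^m0 of f works, each term x^m has a cofactor x^(v m) outside P with x^(v m + m)
  in J, and then the product of these cofactors lies in the prime P.\<close>
lemma prime_colon_key_witness:
  assumes f: "f \<in> Pring V" and P: "prime_ideal_in (Pring V) (colon (Pring V) (mon_ideal V G) f)"
  shows "\<exists>m0\<in>keys f. \<forall>v. keys v \<subseteq> V \<longrightarrow> divisible G (v + m0) \<longrightarrow>
    monomial v \<in> colon (Pring V) (mon_ideal V G) (f :: 'k::field mpoly)"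
proof (rule ccontr)
  let ?P = "colon (Pring V) (mon_ideal V G) f"
  assume "\<not> ?thesis"
  then have "\<forall>m\<in>keys f. \<exists>v. keys v \<subseteq> V \<and> divisible G (v + m) \<and> monomial v \<notin> ?P"
    by blast
  then obtain v where v: "\<And>m. m \<in> keys f \<Longrightarrow> keys (v m) \<subseteq> V \<and> divisible G (v m + m) \<and> monomial (v m) \<notin> ?P"
    by metis
  define u where "u = (\<Sum>m\<in>keys f. v m)"
  have u_V: "keys u \<subseteq> V"
    using keys_sum[of v "keys f"] v by (auto simp: u_def)
  have "divisible G (m + u)" if m: "m \<in> keys f" for m
  proof -
    have "m + u = (v m + m) + (\<Sum>x\<in>keys f - {m}. v x)"
      using m by (simp add: u_def sum.remove ac_simps)
    then show ?thesis
      using divisible_add v[OF m] by simp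
  qed
  then have "f * monomial u \<in> mon_ideal V G"
    by (simp add: mult_monomial_in_mon_ideal_iff[OF f u_V])
  then have "(\<Prod>m\<in>keys f. monomial (v m)) \<in> ?P"
    using Pring_monomial[OF u_V] by (simp add: colon_def u_def monomial_sum mult.commute)
  moreover have "monomial (v m) \<in> Pring V" if "m \<in> keys f" for m
    using v[OF that] by (simp add: Pring_monomial)
  ultimately obtain m where "m \<in> keys f" "monomial (v m) \<in> ?P"
    using prime_ideal_in_prod_mem[OF P, where A = "keys f" and f = "\<lambda>m. monomial (v m)"] by auto
  then show False
    using v by blast
qed

lemma prime_colon_eq_colon_monomial:
  assumes f: "f \<in> Pring V" and P: "prime_ideal_in (Pring V) (colon (Pring V) (mon_ideal V G) f)"
    and closed: "monomial_closed (colon (Pring V) (mon_ideal V G) f)"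
  obtains w where "keys w \<subseteq> V"
    "colon (Pring V) (mon_ideal V G) f = colon (Pring V) (mon_ideal V G) (monomial w :: 'k::field mpoly)"
proof -
  let ?P = "colon (Pring V) (mon_ideal V G) f"
  obtain m0 where m0: "m0 \<in> keys f"
    and m0_P: "\<And>v. keys v \<subseteq> V \<Longrightarrow> divisible G (v + m0) \<Longrightarrow> monomial v \<in> ?P"
    using prime_colon_key_witness[OF f P] by auto
  have m0_V: "keys m0 \<subseteq> V"
    using f m0 by (simp add: Pring_iff)
  have P_ideal: "ideal_in (Pring V) ?P"
    using P by (simp add: prime_ideal_in_def)
  have "monomial m \<in> ?P \<longleftrightarrow> divisible G (m + m0)" if m: "keys m \<subseteq> V" for m
  proof
    assume "monomial m \<in> ?P"
    then have "f * monomial m \<in> mon_ideal V G"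
      by (simp add: colon_def mult.commute)
    then show "divisible G (m + m0)"
      using m0 by (simp add: mult_monomial_in_mon_ideal_iff[OF f m] add.commute)
  qed (rule m0_P[OF m])
  then have "h \<in> ?P \<longleftrightarrow> h * monomial m0 \<in> mon_ideal V G" if h: "h \<in> Pring V" for h
    using monomial_closed_mem_iff[OF closed P_ideal h] mult_monomial_in_mon_ideal_iff[OF h m0_V] h
    by (simp add: Pring_iff)
  then have "?P = colon (Pring V) (mon_ideal V G) (monomial m0)"
    using ideal_in_subset[OF P_ideal] by (auto simp: colon_def)
  then show ?thesis
    using that m0_V by blast
qed

definition unit_exps :: "nat set \<Rightarrow> (nat \<Rightarrow>\<^sub>0 nat) set" where
  "unit_exps T = (\<lambda>i. single i 1) ` T"

definition var_ideal :: "nat set \<Rightarrow> nat set \<Rightarrow> 'k::field mpoly set" where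
  "var_ideal V T = mon_ideal V (unit_exps T)"

lemma divisible_unit_exps_iff: "divisible (unit_exps T) m \<longleftrightarrow> (\<exists>i\<in>T. 0 < lookup m i)"
proof
  assume "divisible (unit_exps T) m"
  then obtain i where "i \<in> T" "lookup (single i 1) i \<le> lookup m i"
    unfolding divisible_def unit_exps_def by blast
  then have "i \<in> T" "0 < lookup m i"
    by (simp_all add: Suc_le_eq)
  then show "\<exists>i\<in>T. 0 < lookup m i"
    by blast
next
  assume "\<exists>i\<in>T. 0 < lookup m i"
  then obtain i where "i \<in> T" "0 < lookup m i"
    by blast
  then have "lookup (single i 1) j \<le> lookup m j" for j
    by (cases "j = i") (simp_all add: lookup_single Suc_le_eq)
  then show "divisible (unit_exps T) m"
    unfolding divisible_def unit_exps_def using \<open>i \<in> T\<close> by blast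
qed

lemma var_ideal_iff: "h \<in> var_ideal V T \<longleftrightarrow> h \<in> Pring V \<and> (\<forall>m\<in>keys h. \<exists>i\<in>T. 0 < lookup m i)"
  by (simp only: var_ideal_def mon_ideal_def divisible_unit_exps_iff mem_Collect_eq)

lemma mult_notin_var_ideal:
  assumes "a \<noteq> 0" "b \<noteq> 0"
    and "\<forall>m\<in>keys a. \<not> divisible (unit_exps T) m" "\<forall>m\<in>keys b. \<not> divisible (unit_exps T) m"
  shows "a * b \<notin> (var_ideal V T :: 'k::field mpoly set)"
proof
  assume "a * b \<in> var_ideal V T"
  then have "divisible (unit_exps T) (Max (keys a) + Max (keys b))"
    using Max_keys_add_in_keys_mult[OF assms(1,2)] by (simp add: var_ideal_def mon_ideal_def)
  then have "divisible (unit_exps T) (Max (keys a)) \<or> divisible (unit_exps T) (Max (keys b))"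
    by (auto simp: divisible_unit_exps_iff lookup_add)
  moreover have "Max (keys a) \<in> keys a" "Max (keys b) \<in> keys b"
    using assms(1,2) by simp_all
  ultimately show False
    using assms(3,4) by blast
qed

lemma var_ideal_prime: "prime_ideal_in (Pring V) (var_ideal V T :: 'k::field mpoly set)"
  unfolding prime_ideal_in_def
proof (intro conjI ballI impI)
  let ?P = "var_ideal V T :: 'k mpoly set"
  show P: "ideal_in (Pring V) ?P"
    by (simp add: var_ideal_def mon_ideal_ideal)
  have "(1 :: 'k mpoly) \<notin> ?P"
    by (simp add: var_ideal_iff)
  then show "?P \<noteq> Pring V"
    using Pring_one[of V] by blast
  fix a b :: "'k mpoly"
  assume a: "a \<in> Pring V" and b: "b \<in> Pring V" and ab: "a * b \<in> ?P"
  define a' where "a' = mon_nf (unit_exps T) a"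
  define b' where "b' = mon_nf (unit_exps T) b"
  have da: "a - a' \<in> ?P" and db: "b - b' \<in> ?P"
    using diff_mon_nf_in_mon_ideal[OF a] diff_mon_nf_in_mon_ideal[OF b]
    by (simp_all add: a'_def b'_def var_ideal_def)
  show "a \<in> ?P \<or> b \<in> ?P"
  proof (rule ccontr)
    assume "\<not> (a \<in> ?P \<or> b \<in> ?P)"
    then have "a' \<noteq> 0" "b' \<noteq> 0"
      using da db by auto
    have "a' \<in> Pring V"
      unfolding a'_def by (rule mon_nf_in_Pring[OF a])
    then have "b * (a - a') + a' * (b - b') \<in> ?P"
      by (intro ideal_in_add[OF P] ideal_in_mult[OF P] b da db)
    then have "a * b - (b * (a - a') + a' * (b - b')) \<in> ?P"
      by (rule ideal_in_Pring_diff[OF P ab])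
    then have "a' * b' \<in> ?P"
      by (simp add: algebra_simps)
    moreover have "a' * b' \<notin> ?P"
      using \<open>a' \<noteq> 0\<close> \<open>b' \<noteq> 0\<close>
      by (intro mult_notin_var_ideal) (simp_all add: a'_def b'_def keys_mon_nf)
    ultimately show False
      by blast
  qed
qed

lemma prime_monomial_mem_iff:
  assumes P: "prime_ideal_in (Pring V) P" and m: "keys m \<subseteq> V"
  shows "monomial m \<in> (P :: 'k::field mpoly set) \<longleftrightarrow> (\<exists>i\<in>keys m. var i \<in> P)"
proof
  assume "monomial m \<in> P"
  then have "(\<Prod>i\<in>keys m. var i ^ lookup m i) \<in> P"
    by (simp flip: monomial_eq_prod_var_pow)
  moreover have "var i ^ lookup m i \<in> Pring V" if "i \<in> keys m" for i
    using m that by (intro Pring_power Pring_var) blast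
  ultimately obtain i where i: "i \<in> keys m" "var i ^ lookup m i \<in> P"
    using prime_ideal_in_prod_mem[OF P, where A = "keys m" and f = "\<lambda>i. var i ^ lookup m i"] by auto
  then show "\<exists>i\<in>keys m. var i \<in> P"
    using prime_ideal_in_pow_mem[OF P Pring_var] m by blast
next
  assume "\<exists>i\<in>keys m. var i \<in> P"
  then obtain i where i: "i \<in> keys m" "var i \<in> P"
    by blast
  have "divisible (unit_exps {i}) m"
    using i(1) by (simp add: divisible_unit_exps_iff in_keys_iff)
  then obtain d where d: "m = single i 1 + d"
    by (auto simp: divisible_iff_add unit_exps_def)
  have "keys d \<subseteq> V"
    using m by (simp add: d keys_add_exps)
  then have "monomial d * var i \<in> P"
    using P i(2) by (intro ideal_in_mult[of "Pring V"] Pring_monomial) (simp_all add: prime_ideal_in_def)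
  then show "monomial m \<in> P"
    by (simp add: d monomial_add var_def mult.commute)
qed

lemma monomial_closed_prime_eq_var_ideal:
  assumes P: "prime_ideal_in (Pring V) P" and closed: "monomial_closed P"
  shows "P = var_ideal V {i \<in> V. var i \<in> (P :: 'k::field mpoly set)}"
proof -
  have P_ideal: "ideal_in (Pring V) P"
    using P by (simp add: prime_ideal_in_def)
  have mon: "monomial m \<in> P \<longleftrightarrow> (\<exists>i\<in>{i \<in> V. var i \<in> P}. 0 < lookup m i)" if "keys m \<subseteq> V" for m
    using prime_monomial_mem_iff[OF P that] that by (auto simp: in_keys_iff)
  have "h \<in> P \<longleftrightarrow> h \<in> var_ideal V {i \<in> V. var i \<in> P}" if "h \<in> Pring V" for h
    using monomial_closed_mem_iff[OF closed P_ideal that] mon that by (auto simp: var_ideal_iff Pring_iff)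
  then show ?thesis
    using ideal_in_subset[OF P_ideal] by (auto simp: var_ideal_iff)
qed

text \<open>The statement (x_i : i \<in> T) = (J : x^w) in K[x_i : i \<in> V], for J generated by the x^g
  with g \<in> G, written on exponent vectors (see var_ideal_eq_colon_monomial_iff).\<close>
definition ass_witness :: "nat set \<Rightarrow> (nat \<Rightarrow>\<^sub>0 nat) set \<Rightarrow> nat set \<Rightarrow> (nat \<Rightarrow>\<^sub>0 nat) \<Rightarrow> bool" where
  "ass_witness V G T w \<longleftrightarrow> (\<forall>m. keys m \<subseteq> V \<longrightarrow> (divisible G (m + w) \<longleftrightarrow> (\<exists>i\<in>T. 0 < lookup m i)))"

lemma var_ideal_eq_colon_monomial_iff:
  assumes w: "keys w \<subseteq> V"
  shows "var_ideal V T = colon (Pring V) (mon_ideal V G) (monomial w :: 'k::field mpoly)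
    \<longleftrightarrow> ass_witness V G T w"
proof
  assume eq: "var_ideal V T = colon (Pring V) (mon_ideal V G) (monomial w :: 'k mpoly)"
  show "ass_witness V G T w"
    unfolding ass_witness_def
  proof (intro allI impI)
    fix m :: "nat \<Rightarrow>\<^sub>0 nat"
    assume m: "keys m \<subseteq> V"
    have m_P: "(monomial m :: 'k mpoly) \<in> Pring V"
      by (rule Pring_monomial[OF m])
    have "(\<exists>i\<in>T. 0 < lookup m i) \<longleftrightarrow> (monomial m :: 'k mpoly) \<in> var_ideal V T"
      using m_P by (simp add: var_ideal_iff)
    also have "\<dots> \<longleftrightarrow> monomial m * monomial w \<in> (mon_ideal V G :: 'k mpoly set)"
      using m_P by (simp add: eq colon_def)
    also have "\<dots> \<longleftrightarrow> divisible G (m + w)"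
      using mult_monomial_in_mon_ideal_iff[OF m_P w] by simp
    finally show "divisible G (m + w) \<longleftrightarrow> (\<exists>i\<in>T. 0 < lookup m i)"
      by simp
  qed
next
  assume wit: "ass_witness V G T w"
  have "h * monomial w \<in> mon_ideal V G \<longleftrightarrow> (\<forall>m\<in>keys h. \<exists>i\<in>T. 0 < lookup m i)"
    if "h \<in> Pring V" for h :: "'k mpoly"
    using mult_monomial_in_mon_ideal_iff[OF that w] that wit by (auto simp: ass_witness_def Pring_iff)
  then show "var_ideal V T = colon (Pring V) (mon_ideal V G) (monomial w :: 'k mpoly)"
    by (auto simp: var_ideal_iff colon_def)
qed

lemma Ass_mon_idealE:
  assumes "P \<in> Ass (Pring V) (mon_ideal V G :: 'k::field mpoly set)"
  obtains T where "T \<subseteq> V" "P = var_ideal V T"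
proof -
  obtain f where f: "f \<in> Pring V" and prime: "prime_ideal_in (Pring V) P"
    and P_f: "P = colon (Pring V) (mon_ideal V G) f"
    using assms unfolding Ass_iff by blast
  have "monomial_closed P"
    using prime_colon_monomial_closed[OF f] prime P_f by simp
  then have "P = var_ideal V {i \<in> V. var i \<in> P}"
    by (rule monomial_closed_prime_eq_var_ideal[OF prime])
  then show ?thesis
    using that[of "{i \<in> V. var i \<in> P}"] by blast
qed

lemma var_ideal_in_Ass_iff:
  "var_ideal V T \<in> Ass (Pring V) (mon_ideal V G :: 'k::field mpoly set)
    \<longleftrightarrow> (\<exists>w. keys w \<subseteq> V \<and> ass_witness V G T w)"
proof
  assume "var_ideal V T \<in> Ass (Pring V) (mon_ideal V G :: 'k mpoly set)"
  then obtain f :: "'k mpoly" where f: "f \<in> Pring V" and P: "prime_ideal_in (Pring V) (var_ideal V T :: 'k mpoly set)"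
    and P_f: "var_ideal V T = colon (Pring V) (mon_ideal V G) f"
    unfolding Ass_iff by blast
  have "monomial_closed (var_ideal V T :: 'k mpoly set)"
    unfolding monomial_closed_def var_ideal_def by (blast intro: mon_ideal_monomial_closed)
  then have "prime_ideal_in (Pring V) (colon (Pring V) (mon_ideal V G) f)"
    "monomial_closed (colon (Pring V) (mon_ideal V G) f)"
    using P by (simp_all add: P_f)
  then obtain w where w: "keys w \<subseteq> V"
    "colon (Pring V) (mon_ideal V G) f = colon (Pring V) (mon_ideal V G) (monomial w)"
    by (rule prime_colon_eq_colon_monomial[OF f])
  then have "var_ideal V T = colon (Pring V) (mon_ideal V G) (monomial w :: 'k mpoly)"
    using P_f by simp
  then have "ass_witness V G T w"
    by (rule var_ideal_eq_colon_monomial_iff[OF w(1), THEN iffD1])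
  then show "\<exists>w. keys w \<subseteq> V \<and> ass_witness V G T w"
    using w(1) by blast
next
  assume "\<exists>w. keys w \<subseteq> V \<and> ass_witness V G T w"
  then obtain w where w: "keys w \<subseteq> V" "ass_witness V G T w"
    by blast
  have "var_ideal V T = colon (Pring V) (mon_ideal V G) (monomial w :: 'k mpoly)"
    by (rule var_ideal_eq_colon_monomial_iff[OF w(1), THEN iffD2, OF w(2)])
  then show "var_ideal V T \<in> Ass (Pring V) (mon_ideal V G :: 'k mpoly set)"
    unfolding Ass_iff using var_ideal_prime Pring_monomial[OF w(1)] by blast
qed

section \<open>Witnesses under localisation\<close>

lemma ass_witness_restr_mon:
  assumes G: "G \<subseteq> exps V" and TW: "T \<subseteq> W" and WV: "W \<subseteq> V" and wit: "ass_witness V G T w"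
  shows "ass_witness W (restr_mon W ` G) T (restr_mon W w)"
  unfolding ass_witness_def
proof (intro allI impI)
  fix m :: "nat \<Rightarrow>\<^sub>0 nat"
  assume m: "keys m \<subseteq> W"
  show "divisible (restr_mon W ` G) (m + restr_mon W w) \<longleftrightarrow> (\<exists>i\<in>T. 0 < lookup m i)"
  proof
    assume "divisible (restr_mon W ` G) (m + restr_mon W w)"
    then obtain g where g: "g \<in> G" and le: "\<And>j. lookup (restr_mon W g) j \<le> lookup (m + restr_mon W w) j"
      unfolding divisible_def by blast
    define y where "y = restr_mon (- W) g"
    have "lookup (restr_mon W g) j \<le> lookup (m + w) j" for j
      using le[of j] by (cases "j \<in> W") (simp_all add: lookup_restr_mon lookup_add)
    then have "divisible G ((m + w) + y)"
      unfolding y_def by (rule divisible_add_restr_mon_compl[OF g])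
    then have "divisible G ((m + y) + w)"
      by (simp add: ac_simps)
    moreover have "keys (m + y) \<subseteq> V"
      using m WV g G by (auto simp: y_def exps_def keys_add_exps keys_restr_mon)
    ultimately obtain i where "i \<in> T" "0 < lookup (m + y) i"
      using wit by (auto simp: ass_witness_def)
    then show "\<exists>i\<in>T. 0 < lookup m i"
      using TW by (auto simp: y_def lookup_add lookup_restr_mon)
  next
    assume "\<exists>i\<in>T. 0 < lookup m i"
    then have "divisible G (m + w)"
      using wit m WV by (auto simp: ass_witness_def)
    then have "divisible (restr_mon W ` G) (restr_mon W (m + w))"
      by (rule divisible_restr_mon)
    then show "divisible (restr_mon W ` G) (m + restr_mon W w)"
      by (simp add: restr_mon_add restr_mon_id[OF m])
  qed
qed

text \<open>y collects the exponents outside W of generators g with x_i x^w divisible by the restriction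
  of x^g to W, for every i \<in> T; adding y to w lifts the witness from W to V.\<close>
lemma ass_witness_padding:
  assumes G: "G \<subseteq> exps V" and TW: "T \<subseteq> W" and "finite T"
    and wit: "ass_witness W (restr_mon W ` G) T w"
  obtains y where "keys y \<subseteq> V - W"
    "\<And>i. i \<in> T \<Longrightarrow> \<exists>g\<in>G. \<forall>j. lookup g j \<le> lookup (single i 1 + w + y) j"
proof -
  have div: "divisible (restr_mon W ` G) (single i 1 + w)" if "i \<in> T" for i
  proof -
    have "keys (single i (1::nat)) \<subseteq> W"
      using that TW by auto
    moreover have "0 < lookup (single i (1::nat)) i"
      by simp
    ultimately show ?thesis
      using wit[unfolded ass_witness_def, rule_format, of "single i 1"] that by blast
  qed
  have "\<exists>g\<in>G. \<forall>j. lookup (restr_mon W g) j \<le> lookup (single i 1 + w) j" if "i \<in> T" for i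
    using div[OF that] unfolding divisible_def by blast
  then obtain gen where gen: "\<And>i. i \<in> T \<Longrightarrow> gen i \<in> G"
    "\<And>i j. i \<in> T \<Longrightarrow> lookup (restr_mon W (gen i)) j \<le> lookup (single i 1 + w) j"
    by metis
  define y where "y = (\<Sum>i\<in>T. restr_mon (- W) (gen i))"
  have "keys (restr_mon (- W) (gen i)) \<subseteq> V - W" if "i \<in> T" for i
    using gen(1)[OF that] G by (auto simp: keys_restr_mon exps_def)
  then have "keys y \<subseteq> V - W"
    using keys_sum[of "\<lambda>i. restr_mon (- W) (gen i)" T] unfolding y_def by blast
  moreover have "\<exists>g\<in>G. \<forall>j. lookup g j \<le> lookup (single i 1 + w + y) j" if i: "i \<in> T" for i
  proof (intro bexI[OF _ gen(1)[OF i]] allI)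
    fix j
    have "lookup (restr_mon (- W) (gen i)) j \<le> lookup y j"
      unfolding y_def lookup_sum using i \<open>finite T\<close> by (intro member_le_sum) simp_all
    then have "lookup (restr_mon W (gen i)) j + lookup (restr_mon (- W) (gen i)) j
        \<le> lookup (single i 1 + w) j + lookup y j"
      using gen(2)[OF i] by (rule add_mono[rotated])
    then show "lookup (gen i) j \<le> lookup (single i 1 + w + y) j"
      by (simp add: lookup_restr_mon lookup_add split: if_splits)
  qed
  ultimately show ?thesis
    using that by blast
qed

lemma ass_witness_extend:
  assumes G: "G \<subseteq> exps V" and TW: "T \<subseteq> W" and WV: "W \<subseteq> V" and "finite T"
    and w: "keys w \<subseteq> W" and wit: "ass_witness W (restr_mon W ` G) T w"
  obtains w' where "keys w' \<subseteq> V" "ass_witness V G T w'"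
proof -
  obtain y where y: "keys y \<subseteq> V - W"
    and gen: "\<And>i. i \<in> T \<Longrightarrow> \<exists>g\<in>G. \<forall>j. lookup g j \<le> lookup (single i 1 + w + y) j"
    using ass_witness_padding[OF G TW \<open>finite T\<close> wit] by blast
  have restr_y: "restr_mon W y = 0"
    using y by (intro poly_mapping_eqI) (auto simp: lookup_restr_mon in_keys_iff)
  have "ass_witness V G T (w + y)"
    unfolding ass_witness_def
  proof (intro allI impI)
    fix m :: "nat \<Rightarrow>\<^sub>0 nat"
    assume m: "keys m \<subseteq> V"
    show "divisible G (m + (w + y)) \<longleftrightarrow> (\<exists>i\<in>T. 0 < lookup m i)"
    proof
      assume "divisible G (m + (w + y))"
      then have "divisible (restr_mon W ` G) (restr_mon W m + w)"
        using divisible_restr_mon[of G "m + (w + y)" W]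
        by (simp add: restr_mon_add restr_y restr_mon_id[OF w])
      then obtain i where "i \<in> T" "0 < lookup (restr_mon W m) i"
        using wit[unfolded ass_witness_def, rule_format, of "restr_mon W m"] by (auto simp: keys_restr_mon)
      then show "\<exists>i\<in>T. 0 < lookup m i"
        by (auto simp: lookup_restr_mon split: if_splits)
    next
      assume "\<exists>i\<in>T. 0 < lookup m i"
      then obtain i where i: "i \<in> T" "0 < lookup m i"
        by blast
      then obtain g where "g \<in> G" "\<And>j. lookup g j \<le> lookup (single i 1 + w + y) j"
        using gen by blast
      moreover have "lookup (single i 1 + w + y) j \<le> lookup (m + (w + y)) j" for j
        using i(2) by (cases "j = i") (simp_all add: lookup_add lookup_single Suc_le_eq)
      ultimately show "divisible G (m + (w + y))"
        unfolding divisible_def by (blast intro: order.trans)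
    qed
  qed
  moreover have "keys (w + y) \<subseteq> V"
    using w WV y by (auto simp: keys_add_exps)
  ultimately show ?thesis
    using that by blast
qed

text \<open>Restricting and extending witnesses shows that Ass(J(p)) consists of the P_T(p) with
  T \<subseteq> W and P_T \<in> Ass(J).\<close>
lemma Ass_mon_ideal_restr_mon_mono:
  assumes WV: "W \<subseteq> V" and "finite W" and G: "G \<subseteq> exps V" and H: "H \<subseteq> exps V"
    and Ass_sub: "Ass (Pring V) (mon_ideal V G :: 'k::field mpoly set) \<subseteq> Ass (Pring V) (mon_ideal V H)"
  shows "Ass (Pring W) (mon_ideal W (restr_mon W ` G) :: 'k mpoly set)
    \<subseteq> Ass (Pring W) (mon_ideal W (restr_mon W ` H))"
proof
  fix P :: "'k mpoly set"
  assume P: "P \<in> Ass (Pring W) (mon_ideal W (restr_mon W ` G))"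
  then obtain T where TW: "T \<subseteq> W" and P_T: "P = var_ideal W T"
    by (rule Ass_mon_idealE)
  obtain w where "keys w \<subseteq> W" "ass_witness W (restr_mon W ` G) T w"
    using P by (auto simp: P_T var_ideal_in_Ass_iff)
  then obtain w' where "keys w' \<subseteq> V" "ass_witness V G T w'"
    using ass_witness_extend[OF G TW WV] finite_subset[OF TW \<open>finite W\<close>] by blast
  then have "var_ideal V T \<in> Ass (Pring V) (mon_ideal V G :: 'k mpoly set)"
    by (auto simp: var_ideal_in_Ass_iff)
  then have "var_ideal V T \<in> Ass (Pring V) (mon_ideal V H :: 'k mpoly set)"
    using Ass_sub by blast
  then obtain w'' where "ass_witness V H T w''"
    by (auto simp: var_ideal_in_Ass_iff)
  then have "ass_witness W (restr_mon W ` H) T (restr_mon W w'')"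
    by (rule ass_witness_restr_mon[OF H TW WV])
  then have "\<exists>w. keys w \<subseteq> W \<and> ass_witness W (restr_mon W ` H) T w"
    by (intro exI[of _ "restr_mon W w''"]) (simp add: keys_restr_mon)
  then show "P \<in> Ass (Pring W) (mon_ideal W (restr_mon W ` H))"
    by (simp add: P_T var_ideal_in_Ass_iff)
qed

theorem theorem3p20:
  fixes I :: "'k::field mpoly set" and n :: nat and W :: "nat set"
  assumes "monomial_ideal {1..n} I"
    and "W \<subseteq> {1..n}"
    and "I \<subseteq> monomial_prime {1..n} W"
    and "copersistent (Pring {1..n}) I"
  shows "copersistent (Pring W) (mon_loc W I)"
proof -
  obtain G where G: "G \<subseteq> exps {1..n}" and I: "I = mon_ideal {1..n} G"
    using assms(1) by (rule monomial_idealE)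
  have pow: "ideal_pow (Pring {1..n}) I k = mon_ideal {1..n} (mon_pow G k)" for k
    unfolding I by (rule ideal_pow_mon_ideal[OF G])
  have "mon_loc W I = mon_ideal W (restr_mon W ` G)"
    unfolding mon_loc_def I by (rule loc_map_mon_ideal[OF assms(2) G])
  then have pow_loc: "ideal_pow (Pring W) (mon_loc W I) k = mon_ideal W (restr_mon W ` mon_pow G k)" for k
    by (simp add: ideal_pow_mon_ideal[OF restr_mon_exps] mon_pow_restr_mon)
  show ?thesis
    unfolding copersistent_def pow_loc
  proof (intro allI impI)
    fix k :: nat
    assume "1 \<le> k"
    then have "Ass (Pring {1..n}) (mon_ideal {1..n} (mon_pow G (Suc k)) :: 'k mpoly set)
        \<subseteq> Ass (Pring {1..n}) (mon_ideal {1..n} (mon_pow G k))"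
      using assms(4) unfolding copersistent_def pow by blast
    then show "Ass (Pring W) (mon_ideal W (restr_mon W ` mon_pow G (Suc k)) :: 'k mpoly set)
        \<subseteq> Ass (Pring W) (mon_ideal W (restr_mon W ` mon_pow G k))"
      by (rule Ass_mon_ideal_restr_mon_mono[OF assms(2) finite_subset[OF assms(2) finite_atLeastAtMost]
            mon_pow_exps[OF G] mon_pow_exps[OF G]])
  qed
qed

end
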